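(* (a) There exist graphs $G$ with $O_{R,k}(G)=\mathcal{M}$ for all positive integers $k$. (b) There exist graphs $G$ with $O_{R,k}(G)=\mathcal{N}$ for all positive integers $k$. (c) There exist graphs $G$ with $O_{R,k}(G)=\mathcal{B}$ for all positive integers $k$. (d) There exists a graph $G$ with $O_{R,1}(G)=\mathcal{N}$ and $O_{R,k}(G)=\mathcal{M}$ for all $k\ge 2$. (e) There exist graphs $G$ with $O_{R,1}(G)=\mathcal{B}$ and $O_{R,k}(G)=\mathcal{N}$ for all $k\ge2$. (f) There exist graphs $G$ with $O_{R,1}(G)=\mathcal{B}$ and $O_{R,k}(G)=\mathcal{M}$ for all $k\ge2$. (g) For every integer $\alpha\ge2$, let $G$ be the graph obtained from a path $v_1v_2\cdots v_\alpha$ as follows: for each $i\in\{1,\dots,\alpha\}$ add two leaves $\ell_i,\ell'_i$ adjacent to $v_i$, and add three vertices $s_i,s'_i,x_i$ with edges $v_is_i$, $v_is'_i$, $s_ix_i$, $s'_ix_i$; then add a vertex $y$ adjacent to all of $x_1,\dots,x_\alpha$ and a vertex $z$ adjacent only to $y$. Then $O_{R,1}(G)=\mathcal{B}$, $O_{R,2}(G)=\mathcal{N}$, and $O_{R,k}(G)=\mathcal{M}$ for all $k\ge3$. In particular, there exist graphs $G$ with $O_{R,1}(G)=\mathcal{B}$, $O_{R,2}(G)=\mathcal{N}$ and $O_{R,k}(G)=\mathcal{M}$ for $k\ge3$.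
   Context: All graphs are finite, simple, undirected and connected. $d$ is the shortest-path distance and $d_k(x,y)=\min\{d(x,y),k+1\}$ for a positive integer $k$. A set $S\subseteq V(G)$ is a distance-$k$ resolving set if for all distinct $x,y\in V(G)$ some $z\in S$ has $d_k(x,z)\ne d_k(y,z)$. In the Maker-Breaker distance-$k$ resolving game on $G$, Maker and Breaker alternately select a not-yet-chosen vertex; Maker wins if his selected vertices form a distance-$k$ resolving set, Breaker wins otherwise. $O_{R,k}(G)=\mathcal{M}$ if Maker has a winning strategy whether he moves first or second, $\mathcal{B}$ if Breaker has a winning strategy whether she moves first or second, and $\mathcal{N}$ if the first player has a winning strategy. *)

theory Defs
  imports Main
begin

definition edges :: "('a \<Rightarrow> 'a \<Rightarrow> bool) \<Rightarrow> ('a \<times> 'a) set" where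
  "edges E = {(x, y). E x y}"

definition conn_graph :: "'a set \<Rightarrow> ('a \<Rightarrow> 'a \<Rightarrow> bool) \<Rightarrow> bool" where
  "conn_graph V E \<longleftrightarrow> finite V \<and> V \<noteq> {}
     \<and> (\<forall>x y. E x y \<longrightarrow> x \<in> V \<and> y \<in> V)
     \<and> (\<forall>x y. E x y \<longrightarrow> E y x)
     \<and> (\<forall>x. \<not> E x x)
     \<and> (\<forall>x\<in>V. \<forall>y\<in>V. (x, y) \<in> (edges E)\<^sup>*)"

definition gdist :: "('a \<Rightarrow> 'a \<Rightarrow> bool) \<Rightarrow> 'a \<Rightarrow> 'a \<Rightarrow> nat" where
  "gdist E x y = (LEAST n. (x, y) \<in> (edges E) ^^ n)"

definition dk :: "('a \<Rightarrow> 'a \<Rightarrow> bool) \<Rightarrow> nat \<Rightarrow> 'a \<Rightarrow> 'a \<Rightarrow> nat" where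
  "dk E k x y = min (gdist E x y) (k + 1)"

definition resolving_k :: "'a set \<Rightarrow> ('a \<Rightarrow> 'a \<Rightarrow> bool) \<Rightarrow> nat \<Rightarrow> 'a set \<Rightarrow> bool" where
  "resolving_k V E k S \<longleftrightarrow> S \<subseteq> V \<and>
     (\<forall>x\<in>V. \<forall>y\<in>V. x \<noteq> y \<longrightarrow> (\<exists>z\<in>S. dk E k x z \<noteq> dk E k y z))"

text \<open>Positions: Maker's chosen set M, Breaker's chosen set B, and whether it is
Maker's turn.\<close>

inductive maker_wins :: "'a set \<Rightarrow> ('a \<Rightarrow> 'a \<Rightarrow> bool) \<Rightarrow> nat \<Rightarrow> 'a set \<Rightarrow> 'a set \<Rightarrow> bool \<Rightarrow> bool"
  for V E k where
  mw_end: "V - (M \<union> B) = {} \<Longrightarrow> resolving_k V E k M \<Longrightarrow> maker_wins V E k M B t"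
| mw_maker: "v \<in> V - (M \<union> B) \<Longrightarrow> maker_wins V E k (insert v M) B False
      \<Longrightarrow> maker_wins V E k M B True"
| mw_breaker: "V - (M \<union> B) \<noteq> {} \<Longrightarrow>
      (\<And>v. v \<in> V - (M \<union> B) \<Longrightarrow> maker_wins V E k M (insert v B) True)
      \<Longrightarrow> maker_wins V E k M B False"

inductive breaker_wins :: "'a set \<Rightarrow> ('a \<Rightarrow> 'a \<Rightarrow> bool) \<Rightarrow> nat \<Rightarrow> 'a set \<Rightarrow> 'a set \<Rightarrow> bool \<Rightarrow> bool"
  for V E k where
  bw_end: "V - (M \<union> B) = {} \<Longrightarrow> \<not> resolving_k V E k M \<Longrightarrow> breaker_wins V E k M B t"
| bw_breaker: "v \<in> V - (M \<union> B) \<Longrightarrow> breaker_wins V E k M (insert v B) True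
      \<Longrightarrow> breaker_wins V E k M B False"
| bw_maker: "V - (M \<union> B) \<noteq> {} \<Longrightarrow>
      (\<And>v. v \<in> V - (M \<union> B) \<Longrightarrow> breaker_wins V E k (insert v M) B False)
      \<Longrightarrow> breaker_wins V E k M B True"

datatype outcome = Outcome_M | Outcome_N | Outcome_B | Outcome_Other

text \<open>O_{R,k}(G). The last branch (second player wins) never occurs for this
game, but is kept so that the definition does not prejudge that fact.\<close>
definition O_R :: "nat \<Rightarrow> 'a set \<Rightarrow> ('a \<Rightarrow> 'a \<Rightarrow> bool) \<Rightarrow> outcome" where
  "O_R k V E =
    (if maker_wins V E k {} {} True \<and> maker_wins V E k {} {} False then Outcome_M
     else if breaker_wins V E k {} {} True \<and> breaker_wins V E k {} {} False then Outcome_B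
     else if maker_wins V E k {} {} True \<and> breaker_wins V E k {} {} False then Outcome_N
     else Outcome_Other)"

datatype gvert = Pv nat | Lv nat | Lv' nat | Sv nat | Sv' nat | Xv nat | Yv | Zv

definition gV :: "nat \<Rightarrow> gvert set" where
  "gV \<alpha> = (\<Union>i\<in>{1..\<alpha>}. {Pv i, Lv i, Lv' i, Sv i, Sv' i, Xv i}) \<union> {Yv, Zv}"

definition gE0 :: "nat \<Rightarrow> gvert \<Rightarrow> gvert \<Rightarrow> bool" where
  "gE0 \<alpha> u w \<longleftrightarrow>
     (\<exists>i. 1 \<le> i \<and> i \<le> \<alpha> \<and>
        ((u = Pv i \<and> (w = Lv i \<or> w = Lv' i \<or> w = Sv i \<or> w = Sv' i))
         \<or> ((u = Sv i \<or> u = Sv' i) \<and> w = Xv i)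
         \<or> (u = Xv i \<and> w = Yv)))
     \<or> (\<exists>i. 1 \<le> i \<and> i < \<alpha> \<and> u = Pv i \<and> w = Pv (Suc i))
     \<or> (u = Yv \<and> w = Zv)"

definition gE :: "nat \<Rightarrow> gvert \<Rightarrow> gvert \<Rightarrow> bool" where
  "gE \<alpha> u w \<longleftrightarrow> gE0 \<alpha> u w \<or> gE0 \<alpha> w u"

end

theory Submission
  imports Defs
begin

text \<open>All outcomes are certified by pairing strategies. Let \<open>P\<close> be a family of disjoint pairs
  of vertices. If every vertex set that meets each pair (and contains a few vertices Maker
  claims first) is distance-\<open>k\<close> resolving, Maker wins by answering each move of Breaker inside
  the same pair; if no vertex set that misses a vertex of each pair (and avoids a few vertices
  Breaker claims first) is resolving, Breaker wins by the same answering strategy.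

  For the small graphs of (a)--(f) and the last part, these conditions are finite and are
  checked by enumerating all transversals of the pairs against a verified distance table.
  For the graph of (g), any set containing one of \<open>l\<^sub>i, l'\<^sub>i\<close> and one of
  \<open>s\<^sub>i, s'\<^sub>i\<close> for every \<open>i\<close>, and also \<open>y\<close> (or \<open>z\<close> when \<open>k \<ge> 3\<close>), is resolving,
  which Maker secures for \<open>k \<ge> 3\<close>, and for \<open>k = 2\<close> when he may start with \<open>y\<close>. For
  \<open>k \<le> 2\<close> Breaker instead keeps free two vertices (a leaf and an \<open>s\<close>-vertex, or two leaves)
  with the same truncated distances to all of Maker's vertices.\<close>

lemma maker_wins_breaker_wins_exclusive:
  "maker_wins V E k M B t \<Longrightarrow> breaker_wins V E k M B t \<Longrightarrow> False"
proof (induction rule: maker_wins.induct)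
  case (mw_end M B t)
  from mw_end.prems show ?case
    by (cases rule: breaker_wins.cases) (use mw_end.hyps in auto)
next
  case (mw_maker v M B)
  from mw_maker.prems show ?case
    by (cases rule: breaker_wins.cases) (use mw_maker.hyps mw_maker.IH in auto)
next
  case (mw_breaker M B)
  from mw_breaker.prems show ?case
    by (cases rule: breaker_wins.cases) (use mw_breaker.hyps mw_breaker.IH in auto)
qed

lemma O_R_eq_Outcome_M:
  "maker_wins V E k {} {} True \<Longrightarrow> maker_wins V E k {} {} False \<Longrightarrow> O_R k V E = Outcome_M"
  by (simp add: O_R_def)

lemma O_R_eq_Outcome_B:
  "breaker_wins V E k {} {} True \<Longrightarrow> breaker_wins V E k {} {} False \<Longrightarrow> O_R k V E = Outcome_B"
  using maker_wins_breaker_wins_exclusive by (fastforce simp: O_R_def)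

lemma O_R_eq_Outcome_N:
  "maker_wins V E k {} {} True \<Longrightarrow> breaker_wins V E k {} {} False \<Longrightarrow> O_R k V E = Outcome_N"
  using maker_wins_breaker_wins_exclusive by (fastforce simp: O_R_def)

section \<open>Pairing strategies\<close>

definition disjoint_pairs :: "'a set \<Rightarrow> 'a set set \<Rightarrow> bool" where
  "disjoint_pairs V P \<longleftrightarrow> (\<forall>p\<in>P. p \<subseteq> V \<and> card p = 2) \<and> pairwise disjnt P"

definition pairs_answered :: "'a set set \<Rightarrow> 'a set \<Rightarrow> 'a set \<Rightarrow> bool" where
  "pairs_answered P A C \<longleftrightarrow> (\<forall>p\<in>P. p \<inter> C \<noteq> {} \<longrightarrow> p \<inter> A \<noteq> {})"

definition transversals_resolve ::
    "'a set \<Rightarrow> ('a \<Rightarrow> 'a \<Rightarrow> bool) \<Rightarrow> nat \<Rightarrow> 'a set set \<Rightarrow> 'a set \<Rightarrow> bool" where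
  "transversals_resolve V E k P M0 \<longleftrightarrow>
     (\<forall>M. M0 \<subseteq> M \<and> M \<subseteq> V \<and> (\<forall>p\<in>P. p \<inter> M \<noteq> {}) \<longrightarrow> resolving_k V E k M)"

definition pair_free_sets_fail ::
    "'a set \<Rightarrow> ('a \<Rightarrow> 'a \<Rightarrow> bool) \<Rightarrow> nat \<Rightarrow> 'a set set \<Rightarrow> 'a set \<Rightarrow> bool" where
  "pair_free_sets_fail V E k P B0 \<longleftrightarrow>
     (\<forall>M. M \<subseteq> V - B0 \<and> (\<forall>p\<in>P. \<not> p \<subseteq> M) \<longrightarrow> \<not> resolving_k V E k M)"

lemma transversals_resolveD:
  "transversals_resolve V E k P M0 \<Longrightarrow> M0 \<subseteq> M \<Longrightarrow> M \<subseteq> V \<Longrightarrow> (\<And>p. p \<in> P \<Longrightarrow> p \<inter> M \<noteq> {})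
    \<Longrightarrow> resolving_k V E k M"
  unfolding transversals_resolve_def by simp

lemma pair_free_sets_failD:
  "pair_free_sets_fail V E k P B0 \<Longrightarrow> M \<subseteq> V - B0 \<Longrightarrow> (\<And>p. p \<in> P \<Longrightarrow> \<not> p \<subseteq> M)
    \<Longrightarrow> \<not> resolving_k V E k M"
  unfolding pair_free_sets_fail_def by simp

lemma transversals_resolveI:
  "(\<And>M. M0 \<subseteq> M \<Longrightarrow> M \<subseteq> V \<Longrightarrow> (\<And>p. p \<in> P \<Longrightarrow> p \<inter> M \<noteq> {}) \<Longrightarrow> resolving_k V E k M)
    \<Longrightarrow> transversals_resolve V E k P M0"
  unfolding transversals_resolve_def by simp

lemma pair_free_sets_failI:
  "(\<And>M. M \<subseteq> V - B0 \<Longrightarrow> (\<And>p. p \<in> P \<Longrightarrow> \<not> p \<subseteq> M) \<Longrightarrow> \<not> resolving_k V E k M)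
    \<Longrightarrow> pair_free_sets_fail V E k P B0"
  unfolding pair_free_sets_fail_def by simp

lemma disjoint_pairs_nonempty: "disjoint_pairs V P \<Longrightarrow> p \<in> P \<Longrightarrow> p \<noteq> {}"
  by (auto simp: disjoint_pairs_def)

lemma card_2_partner:
  assumes "card p = 2" "v \<in> p"
  obtains u where "p = {u, v}" "u \<noteq> v"
proof -
  from assms(1) obtain x y where xy: "p = {x, y}" "x \<noteq> y" by (meson card_2_iff)
  show thesis
  proof (cases "v = x")
    case True
    with xy show thesis by (intro that[of y]) auto
  next
    case False
    with xy assms(2) show thesis by (intro that[of x]) auto
  qed
qed

lemma pairs_answered_partner_free:
  assumes P: "disjoint_pairs V P" and ans: "pairs_answered P A C"
    and p: "p \<in> P" "v \<in> p" "p \<inter> A = {}" and v: "v \<notin> C"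
  obtains u where "p = {u, v}" "u \<in> V - (A \<union> insert v C)"
proof -
  from P p(1) have pV: "p \<subseteq> V" and p2: "card p = 2" by (auto simp: disjoint_pairs_def)
  from p2 p(2) obtain u where u: "p = {u, v}" "u \<noteq> v" by (rule card_2_partner)
  have "p \<inter> C = {}" using ans p(1,3) unfolding pairs_answered_def by blast
  with u pV p(3) v have "u \<in> V - (A \<union> insert v C)" by blast
  with u(1) show thesis by (rule that)
qed

lemma pairs_answered_respond:
  assumes P: "disjoint_pairs V P" and ans: "pairs_answered P A C"
    and v: "v \<in> V - (A \<union> C)" and free: "V - (A \<union> insert v C) \<noteq> {}"
  shows "\<exists>u \<in> V - (A \<union> insert v C). pairs_answered P (insert u A) (insert v C)"
proof (cases "\<exists>p\<in>P. v \<in> p \<and> p \<inter> A = {}")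
  case True
  then obtain p where p: "p \<in> P" "v \<in> p" "p \<inter> A = {}" by blast
  from v have "v \<notin> C" by blast
  with P ans p obtain u where u: "p = {u, v}" "u \<in> V - (A \<union> insert v C)"
    by (rule pairs_answered_partner_free)
  have "pairs_answered P (insert u A) (insert v C)"
    unfolding pairs_answered_def
  proof (intro ballI impI)
    fix q assume q: "q \<in> P" "q \<inter> insert v C \<noteq> {}"
    show "q \<inter> insert u A \<noteq> {}"
    proof (cases "q = p")
      case True
      then show ?thesis using u(1) by blast
    next
      case False
      with P p(1,2) q(1) have "v \<notin> q"
        unfolding disjoint_pairs_def pairwise_def disjnt_def by blast
      with q have "q \<inter> C \<noteq> {}" by blast
      with q(1) ans show ?thesis unfolding pairs_answered_def by blast
    qed
  qed
  with u(2) show ?thesis by blast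
next
  case False
  have "pairs_answered P (insert u A) (insert v C)" for u
    unfolding pairs_answered_def
  proof (intro ballI impI)
    fix q assume q: "q \<in> P" "q \<inter> insert v C \<noteq> {}"
    show "q \<inter> insert u A \<noteq> {}"
    proof (cases "v \<in> q")
      case True
      with False q(1) show ?thesis by blast
    next
      case False
      with q have "q \<inter> C \<noteq> {}" by blast
      with q(1) ans show ?thesis unfolding pairs_answered_def by blast
    qed
  qed
  with free show ?thesis by blast
qed

lemma pairs_answered_last_move:
  assumes P: "disjoint_pairs V P" and ans: "pairs_answered P A C"
    and v: "v \<in> V - (A \<union> C)" and full: "V - (A \<union> insert v C) = {}"
  shows "pairs_answered P A (insert v C)"
  unfolding pairs_answered_def
proof (intro ballI impI notI)
  fix p assume p: "p \<in> P" "p \<inter> insert v C \<noteq> {}" "p \<inter> A = {}"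
  with ans have "v \<in> p" unfolding pairs_answered_def by blast
  moreover from v have "v \<notin> C" by blast
  ultimately obtain u where "p = {u, v}" "u \<in> V - (A \<union> insert v C)"
    by (rule pairs_answered_partner_free[OF P ans p(1) _ p(3)])
  with full show False by blast
qed

lemma pairs_answered_full_board:
  assumes "disjoint_pairs V P" "pairs_answered P A C" "V - (A \<union> C) = {}" "p \<in> P"
  shows "p \<inter> A \<noteq> {}"
proof -
  from assms(1,4) have "p \<subseteq> V" "p \<noteq> {}" by (auto simp: disjoint_pairs_def)
  with assms(2-4) show ?thesis unfolding pairs_answered_def by blast
qed

lemma pairs_answered_no_pair_inside:
  assumes "disjoint_pairs V P" "pairs_answered P B M" "M \<inter> B = {}" "p \<in> P"
  shows "\<not> p \<subseteq> M"
  using assms disjoint_pairs_nonempty[OF assms(1,4)] unfolding pairs_answered_def by blast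

lemma maker_wins_full_board:
  assumes "disjoint_pairs V P" "transversals_resolve V E k P M0" "M0 \<subseteq> M" "M \<subseteq> V"
    "pairs_answered P M B" "V - (M \<union> B) = {}"
  shows "maker_wins V E k M B t"
proof (rule mw_end[OF assms(6)])
  show "resolving_k V E k M"
    using assms(2-4) pairs_answered_full_board[OF assms(1,5,6)] by (rule transversals_resolveD)
qed

lemma breaker_wins_full_board:
  assumes "disjoint_pairs V P" "pair_free_sets_fail V E k P B0" "B0 \<subseteq> B" "M \<subseteq> V" "M \<inter> B = {}"
    "pairs_answered P B M" "V - (M \<union> B) = {}"
  shows "breaker_wins V E k M B t"
proof (rule bw_end[OF assms(7)])
  have "M \<subseteq> V - B0" using assms(3-5) by blast
  with assms(2) show "\<not> resolving_k V E k M"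
    using pairs_answered_no_pair_inside[OF assms(1,6,5)] by (rule pair_free_sets_failD)
qed

text \<open>Maker's pairing strategy: whenever Breaker claims a vertex of a pair that Maker has not
  yet touched, Maker claims the other vertex; otherwise he plays anywhere.\<close>

lemma maker_wins_by_pairing:
  assumes fin: "finite V" and P: "disjoint_pairs V P"
    and goal: "transversals_resolve V E k P M0"
  shows "M0 \<subseteq> M \<Longrightarrow> M \<subseteq> V \<Longrightarrow> pairs_answered P M B \<Longrightarrow> maker_wins V E k M B False"
proof (induction "card (V - (M \<union> B))" arbitrary: M B rule: less_induct)
  case less
  show ?case
  proof (cases "V - (M \<union> B) = {}")
    case True
    then show ?thesis by (rule maker_wins_full_board[OF P goal less.prems])
  next
    case False
    show ?thesis
    proof (rule mw_breaker[OF False])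
      fix v assume v: "v \<in> V - (M \<union> B)"
      show "maker_wins V E k M (insert v B) True"
      proof (cases "V - (M \<union> insert v B) = {}")
        case True
        with pairs_answered_last_move[OF P less.prems(3) v True] show ?thesis
          by (rule maker_wins_full_board[OF P goal less.prems(1,2)])
      next
        case False
        then obtain u where u: "u \<in> V - (M \<union> insert v B)"
          and ans: "pairs_answered P (insert u M) (insert v B)"
          using pairs_answered_respond[OF P less.prems(3) v] by blast
        have "card (V - (insert u M \<union> insert v B)) < card (V - (M \<union> B))"
          using fin u v by (intro psubset_card_mono) auto
        moreover have "M0 \<subseteq> insert u M" "insert u M \<subseteq> V"
          using less.prems(1,2) u by auto
        ultimately have "maker_wins V E k (insert u M) (insert v B) False"
          using ans by (rule less.hyps)
        then show ?thesis by (rule mw_maker[OF u])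
      qed
    qed
  qed
qed

lemma breaker_wins_by_pairing:
  assumes fin: "finite V" and P: "disjoint_pairs V P"
    and goal: "pair_free_sets_fail V E k P B0"
  shows "B0 \<subseteq> B \<Longrightarrow> M \<subseteq> V \<Longrightarrow> M \<inter> B = {} \<Longrightarrow> pairs_answered P B M
    \<Longrightarrow> breaker_wins V E k M B True"
proof (induction "card (V - (M \<union> B))" arbitrary: M B rule: less_induct)
  case less
  show ?case
  proof (cases "V - (M \<union> B) = {}")
    case True
    then show ?thesis by (rule breaker_wins_full_board[OF P goal less.prems])
  next
    case False
    show ?thesis
    proof (rule bw_maker[OF False])
      fix v assume v: "v \<in> V - (M \<union> B)"
      then have v': "v \<in> V - (B \<union> M)" by blast
      have swap: "B \<union> insert v M = insert v M \<union> B" by blast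
      show "breaker_wins V E k (insert v M) B False"
      proof (cases "V - (insert v M \<union> B) = {}")
        case True
        then have "pairs_answered P B (insert v M)"
          by (rule pairs_answered_last_move[OF P less.prems(4) v', unfolded swap])
        moreover have "insert v M \<subseteq> V" "insert v M \<inter> B = {}"
          using less.prems(2,3) v by auto
        ultimately show ?thesis
          using breaker_wins_full_board[OF P goal less.prems(1) _ _ _ True] by blast
      next
        case False
        then obtain u where u: "u \<in> V - (insert v M \<union> B)"
          and ans: "pairs_answered P (insert u B) (insert v M)"
          using pairs_answered_respond[OF P less.prems(4) v', unfolded swap] by blast
        have "card (V - (insert v M \<union> insert u B)) < card (V - (M \<union> B))"
          using fin u v by (intro psubset_card_mono) auto
        moreover have "B0 \<subseteq> insert u B" "insert v M \<subseteq> V" "insert v M \<inter> insert u B = {}"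
          using less.prems(1-3) u v by auto
        ultimately have "breaker_wins V E k (insert v M) (insert u B) True"
          using ans by (rule less.hyps)
        then show ?thesis by (rule bw_breaker[OF u])
      qed
    qed
  qed
qed

lemma maker_wins_second_by_pairing:
  "finite V \<Longrightarrow> disjoint_pairs V P \<Longrightarrow> transversals_resolve V E k P {}
    \<Longrightarrow> maker_wins V E k {} {} False"
  by (rule maker_wins_by_pairing) (auto simp: pairs_answered_def)

lemma maker_wins_first_by_pairing:
  assumes "finite V" "disjoint_pairs V P" "transversals_resolve V E k P {a}" "a \<in> V"
  shows "maker_wins V E k {} {} True"
proof (rule mw_maker[of a])
  show "maker_wins V E k (insert a {}) {} False"
    by (rule maker_wins_by_pairing[OF assms(1-3)]) (use assms(4) in \<open>auto simp: pairs_answered_def\<close>)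
qed (use assms(4) in simp)

lemma breaker_wins_second_by_pairing:
  "finite V \<Longrightarrow> disjoint_pairs V P \<Longrightarrow> pair_free_sets_fail V E k P {}
    \<Longrightarrow> breaker_wins V E k {} {} True"
  by (rule breaker_wins_by_pairing) (auto simp: pairs_answered_def)

lemma breaker_wins_first_by_pairing:
  assumes "finite V" "disjoint_pairs V P" "pair_free_sets_fail V E k P {b}" "b \<in> V"
  shows "breaker_wins V E k {} {} False"
proof (rule bw_breaker[of b])
  show "breaker_wins V E k {} (insert b {}) True"
    by (rule breaker_wins_by_pairing[OF assms(1-3)]) (auto simp: pairs_answered_def)
qed (use assms(4) in simp)

lemma O_R_eq_Outcome_M_by_pairing:
  assumes "finite V" "disjoint_pairs V P" "transversals_resolve V E k P {}" "a \<in> V"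
  shows "O_R k V E = Outcome_M"
proof (rule O_R_eq_Outcome_M)
  have "transversals_resolve V E k P {a}"
    using assms(3) unfolding transversals_resolve_def by blast
  with assms show "maker_wins V E k {} {} True" by (intro maker_wins_first_by_pairing)
  show "maker_wins V E k {} {} False" by (rule maker_wins_second_by_pairing[OF assms(1-3)])
qed

lemma O_R_eq_Outcome_B_by_pairing:
  assumes "finite V" "disjoint_pairs V P" "pair_free_sets_fail V E k P {}" "b \<in> V"
  shows "O_R k V E = Outcome_B"
proof (rule O_R_eq_Outcome_B)
  show "breaker_wins V E k {} {} True" by (rule breaker_wins_second_by_pairing[OF assms(1-3)])
  have "pair_free_sets_fail V E k P {b}"
    using assms(3) unfolding pair_free_sets_fail_def by blast
  with assms show "breaker_wins V E k {} {} False" by (intro breaker_wins_first_by_pairing)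
qed

lemma O_R_eq_Outcome_N_by_pairing:
  assumes "finite V"
    and "disjoint_pairs V P" "transversals_resolve V E k P {a}" "a \<in> V"
    and "disjoint_pairs V Q" "pair_free_sets_fail V E k Q {b}" "b \<in> V"
  shows "O_R k V E = Outcome_N"
  by (rule O_R_eq_Outcome_N maker_wins_first_by_pairing breaker_wins_first_by_pairing assms)+

section \<open>Distances\<close>

lemma in_edges: "(x, y) \<in> edges E \<longleftrightarrow> E x y"
  by (simp add: edges_def)

lemma relpow_edges_Suc:
  "(x, z) \<in> edges E ^^ Suc n \<longleftrightarrow> (\<exists>w. E x w \<and> (w, z) \<in> edges E ^^ n)"
proof -
  have "(x, z) \<in> edges E ^^ Suc n \<longleftrightarrow> (\<exists>w. (x, w) \<in> edges E \<and> (w, z) \<in> edges E ^^ n)"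
    using relpow_Suc_D2[of x z n "edges E"] relpow_Suc_I2[of x _ "edges E" z n] by blast
  then show ?thesis by (simp only: in_edges)
qed

lemma gdist_walk: "(x, z) \<in> (edges E)\<^sup>* \<Longrightarrow> (x, z) \<in> edges E ^^ gdist E x z"
  unfolding gdist_def by (rule LeastI_ex) (simp add: rtrancl_power)

lemma gdist_le: "(x, z) \<in> edges E ^^ n \<Longrightarrow> gdist E x z \<le> n"
  unfolding gdist_def by (rule Least_le)

lemma gdist_eq_iff:
  assumes "(x, z) \<in> (edges E)\<^sup>*"
  shows "gdist E x z = n \<longleftrightarrow> (x, z) \<in> edges E ^^ n \<and> (\<forall>m<n. (x, z) \<notin> edges E ^^ m)"
  using gdist_walk[OF assms] gdist_le by (metis le_antisym not_less)

lemma gdist_eq_0_iff: "(x, z) \<in> (edges E)\<^sup>* \<Longrightarrow> gdist E x z = 0 \<longleftrightarrow> x = z"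
  by (simp add: gdist_eq_iff)

lemma gdist_eq_1_iff: "(x, z) \<in> (edges E)\<^sup>* \<Longrightarrow> gdist E x z = 1 \<longleftrightarrow> E x z \<and> x \<noteq> z"
  by (simp add: gdist_eq_iff relpow_edges_Suc in_edges)

lemma gdist_eq_2_iff: "(x, z) \<in> (edges E)\<^sup>* \<Longrightarrow>
    gdist E x z = 2 \<longleftrightarrow> (\<exists>w. E x w \<and> E w z) \<and> \<not> E x z \<and> x \<noteq> z"
  by (simp add: gdist_eq_iff relpow_edges_Suc in_edges numeral_2_eq_2 less_Suc_eq del: relpow.simps(2)) blast

lemma gdist_eq_3_iff: "(x, z) \<in> (edges E)\<^sup>* \<Longrightarrow>
    gdist E x z = 3 \<longleftrightarrow> (\<exists>w w'. E x w \<and> E w w' \<and> E w' z)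
      \<and> \<not> (\<exists>w. E x w \<and> E w z) \<and> \<not> E x z \<and> x \<noteq> z"
  by (simp add: gdist_eq_iff relpow_edges_Suc in_edges numeral_3_eq_3 less_Suc_eq del: relpow.simps(2)) blast

lemma dk_neq:
  "d \<le> k \<Longrightarrow> gdist E x z = d \<Longrightarrow> gdist E y z \<noteq> d \<Longrightarrow> dk E k x z \<noteq> dk E k y z"
  unfolding dk_def by (auto simp: min_def)

lemma dk_1_eq:
  "(x, z) \<in> (edges E)\<^sup>* \<Longrightarrow> dk E 1 x z = (if x = z then 0 else if E x z then 1 else 2)"
  using gdist_eq_0_iff[of x z E] gdist_eq_1_iff[of x z E] by (auto simp: dk_def min_def)

lemma dk_2_eq:
  "(x, z) \<in> (edges E)\<^sup>* \<Longrightarrow>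
    dk E 2 x z = (if x = z then 0 else if E x z then 1 else if \<exists>w. E x w \<and> E w z then 2 else 3)"
  using gdist_eq_0_iff[of x z E] gdist_eq_1_iff[of x z E] gdist_eq_2_iff[of x z E]
  by (auto simp: dk_def min_def)

definition distinguishes :: "('a \<Rightarrow> 'a \<Rightarrow> bool) \<Rightarrow> nat \<Rightarrow> 'a set \<Rightarrow> 'a \<Rightarrow> 'a \<Rightarrow> bool" where
  "distinguishes E k S x y \<longleftrightarrow> (\<exists>z\<in>S. dk E k x z \<noteq> dk E k y z)"

lemma distinguishes_sym: "distinguishes E k S x y \<Longrightarrow> distinguishes E k S y x"
  unfolding distinguishes_def by (blast dest: not_sym)

lemma distinguishesI:
  assumes "z \<in> S" "d \<le> k" "gdist E x z = d" "gdist E y z \<noteq> d"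
  shows "distinguishes E k S x y"
  unfolding distinguishes_def using assms(1) dk_neq[OF assms(2-4)] by blast

lemma resolving_kI:
  "S \<subseteq> V \<Longrightarrow> (\<And>x y. x \<in> V \<Longrightarrow> y \<in> V \<Longrightarrow> x \<noteq> y \<Longrightarrow> distinguishes E k S x y)
    \<Longrightarrow> resolving_k V E k S"
  unfolding resolving_k_def distinguishes_def by blast

lemma not_resolving_kI:
  "x \<in> V \<Longrightarrow> y \<in> V \<Longrightarrow> x \<noteq> y \<Longrightarrow> (\<And>z. z \<in> S \<Longrightarrow> dk E k x z = dk E k y z)
    \<Longrightarrow> \<not> resolving_k V E k S"
  unfolding resolving_k_def by blast

lemma resolving_k_mono: "resolving_k V E k S \<Longrightarrow> S \<subseteq> S' \<Longrightarrow> S' \<subseteq> V \<Longrightarrow> resolving_k V E k S'"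
  unfolding resolving_k_def by blast

lemma resolving_k_mono_k:
  assumes "resolving_k V E k S" "k \<le> k'"
  shows "resolving_k V E k' S"
proof -
  have "dk E k x z = min (dk E k' x z) (k + 1)" for x z
    using \<open>k \<le> k'\<close> by (simp add: dk_def min.assoc)
  with assms(1) show ?thesis unfolding resolving_k_def by metis
qed

lemma resolving_k_eq_beyond_diameter:
  assumes "\<forall>x\<in>V. \<forall>z\<in>V. gdist E x z \<le> k0 + 1" "k0 \<le> k"
  shows "resolving_k V E k S \<longleftrightarrow> resolving_k V E k0 S"
proof -
  have dk_eq: "dk E k x z = dk E k0 x z" if "x \<in> V" "z \<in> V" for x z
  proof -
    have "gdist E x z \<le> k0 + 1" using assms(1) that by blast
    with assms(2) show ?thesis by (simp add: dk_def min_def)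
  qed
  have "(\<exists>z\<in>S. dk E k x z \<noteq> dk E k y z) \<longleftrightarrow> (\<exists>z\<in>S. dk E k0 x z \<noteq> dk E k0 y z)"
    if "S \<subseteq> V" "x \<in> V" "y \<in> V" for x y
    using that dk_eq by (intro bex_cong) auto
  then show ?thesis unfolding resolving_k_def by blast
qed

lemma transversals_resolve_mono_k:
  assumes "transversals_resolve V E k P M0" "k \<le> k'"
  shows "transversals_resolve V E k' P M0"
proof (rule transversals_resolveI)
  fix M assume "M0 \<subseteq> M" "M \<subseteq> V" "\<And>p. p \<in> P \<Longrightarrow> p \<inter> M \<noteq> {}"
  then have "resolving_k V E k M" by (rule transversals_resolveD[OF assms(1)])
  then show "resolving_k V E k' M" using assms(2) by (rule resolving_k_mono_k)
qed

lemma pair_free_sets_fail_all_k: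
  assumes "\<forall>x\<in>V. \<forall>z\<in>V. gdist E x z \<le> k0 + 1" "pair_free_sets_fail V E k0 P B0"
  shows "pair_free_sets_fail V E k P B0"
proof (rule pair_free_sets_failI notI)+
  fix M assume M: "M \<subseteq> V - B0" and no_pair: "\<And>p. p \<in> P \<Longrightarrow> \<not> p \<subseteq> M"
    and res: "resolving_k V E k M"
  have "\<not> resolving_k V E k0 M" using assms(2) M no_pair by (rule pair_free_sets_failD)
  moreover have "resolving_k V E k0 M"
  proof (cases "k \<le> k0")
    case True
    with res show ?thesis by (rule resolving_k_mono_k)
  next
    case False
    then have "k0 \<le> k" by simp
    with res show ?thesis using resolving_k_eq_beyond_diameter[OF assms(1)] by blast
  qed
  ultimately show False by contradiction
qed

section \<open>Certificates for concrete graphs\<close>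

definition distance_table :: "'a set \<Rightarrow> ('a \<Rightarrow> 'a \<Rightarrow> bool) \<Rightarrow> ('a \<Rightarrow> 'a \<Rightarrow> nat) \<Rightarrow> bool" where
  "distance_table V E D \<longleftrightarrow> (\<forall>x\<in>V. D x x = 0)
     \<and> (\<forall>x\<in>V. \<forall>y\<in>V. E x y \<longrightarrow> (\<forall>z\<in>V. D x z \<le> D y z + 1))
     \<and> (\<forall>x\<in>V. \<forall>z\<in>V. x \<noteq> z \<longrightarrow> (\<exists>y\<in>V. E x y \<and> D y z + 1 = D x z))"

context
  fixes V E D
  assumes edges_in: "\<And>x y. E x y \<Longrightarrow> x \<in> V \<and> y \<in> V"
    and table: "distance_table V E D"
begin

lemma distance_table_0: "x \<in> V \<Longrightarrow> D x x = 0"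
  using table unfolding distance_table_def by blast

lemma distance_table_edge: "x \<in> V \<Longrightarrow> y \<in> V \<Longrightarrow> z \<in> V \<Longrightarrow> E x y \<Longrightarrow> D x z \<le> D y z + 1"
  using table unfolding distance_table_def by blast

lemma distance_table_step:
  "x \<in> V \<Longrightarrow> z \<in> V \<Longrightarrow> x \<noteq> z \<Longrightarrow> \<exists>y\<in>V. E x y \<and> D y z + 1 = D x z"
  using table unfolding distance_table_def by blast

lemma distance_table_le_walk:
  "(x, z) \<in> edges E ^^ n \<Longrightarrow> x \<in> V \<Longrightarrow> z \<in> V \<Longrightarrow> D x z \<le> n"
proof (induction n arbitrary: x)
  case 0
  then show ?case by (simp add: distance_table_0)
next
  case (Suc n)
  from Suc.prems(1) obtain y where y: "E x y" "(y, z) \<in> edges E ^^ n"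
    unfolding relpow_edges_Suc by blast
  with edges_in have "y \<in> V" by blast
  with Suc y have "D y z \<le> n" by blast
  moreover have "D x z \<le> D y z + 1"
    using distance_table_edge Suc.prems(2,3) \<open>y \<in> V\<close> y(1) by blast
  ultimately show ?case by simp
qed

lemma distance_table_walk: "x \<in> V \<Longrightarrow> z \<in> V \<Longrightarrow> (x, z) \<in> edges E ^^ D x z"
proof (induction "D x z" arbitrary: x)
  case 0
  then have "x = z" using distance_table_step by fastforce
  with "0.hyps" show ?case by simp
next
  case (Suc n)
  then have "x \<noteq> z" using distance_table_0 by fastforce
  with Suc.prems obtain y where y: "y \<in> V" "E x y" "D y z + 1 = D x z"
    using distance_table_step by blast
  have "n = D y z" using Suc.hyps(2) y(3) by simp
  with Suc.hyps(1)[OF this y(1)] Suc.prems(2) have "(y, z) \<in> edges E ^^ n" by simp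
  with y(2) have "(x, z) \<in> edges E ^^ Suc n" unfolding relpow_edges_Suc by blast
  with Suc.hyps(2) show ?case by simp
qed

lemma gdist_eq_distance_table: "x \<in> V \<Longrightarrow> z \<in> V \<Longrightarrow> gdist E x z = D x z"
  using distance_table_walk distance_table_le_walk gdist_le
  unfolding gdist_def by (blast intro: Least_equality)

lemma conn_graph_if_distance_table:
  assumes "finite V" "V \<noteq> {}" "\<And>x y. E x y \<Longrightarrow> E y x" "\<And>x. \<not> E x x"
  shows "conn_graph V E"
  using assms edges_in distance_table_walk relpow_imp_rtrancl
  unfolding conn_graph_def by blast

end

definition resolving_by_dist :: "'a set \<Rightarrow> ('a \<Rightarrow> 'a \<Rightarrow> nat) \<Rightarrow> nat \<Rightarrow> 'a set \<Rightarrow> bool" where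
  "resolving_by_dist V D k S \<longleftrightarrow> S \<subseteq> V \<and>
     (\<forall>x\<in>V. \<forall>y\<in>V. x \<noteq> y \<longrightarrow> (\<exists>z\<in>S. min (D x z) (k + 1) \<noteq> min (D y z) (k + 1)))"

lemma resolving_k_eq_resolving_by_dist:
  assumes "\<forall>x\<in>V. \<forall>z\<in>V. gdist E x z = D x z"
  shows "resolving_k V E k S \<longleftrightarrow> resolving_by_dist V D k S"
proof -
  have "(\<exists>z\<in>S. dk E k x z \<noteq> dk E k y z) \<longleftrightarrow> (\<exists>z\<in>S. min (D x z) (k + 1) \<noteq> min (D y z) (k + 1))"
    if "S \<subseteq> V" "x \<in> V" "y \<in> V" for x y
    using that assms by (intro bex_cong) (auto simp: dk_def)
  then show ?thesis unfolding resolving_k_def resolving_by_dist_def by blast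
qed

fun transversals :: "('a \<times> 'a) list \<Rightarrow> 'a list list" where
  "transversals [] = [[]]"
| "transversals ((a, b) # ps) = map ((#) a) (transversals ps) @ map ((#) b) (transversals ps)"

definition pair_set :: "('a \<times> 'a) list \<Rightarrow> 'a set set" where
  "pair_set ps = (\<lambda>(a, b). {a, b}) ` set ps"

lemma disjoint_pairs_pair_set:
  assumes "distinct (concat (map (\<lambda>(a, b). [a, b]) ps))" "\<forall>(a, b)\<in>set ps. a \<in> V \<and> b \<in> V"
  shows "disjoint_pairs V (pair_set ps)"
  using assms
proof (induction ps)
  case Nil
  then show ?case by (simp add: disjoint_pairs_def pair_set_def)
next
  case (Cons ab ps)
  obtain a b where ab: "ab = (a, b)" by fastforce
  have "disjnt {a, b} q" if "q \<in> pair_set ps" for q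
    using Cons.prems that ab by (auto simp: pair_set_def disjnt_def)
  with Cons ab show ?case
    by (auto simp: disjoint_pairs_def pair_set_def pairwise_insert disjnt_sym)
qed

lemma transversals_choice:
  "(\<And>p. p \<in> pair_set ps \<Longrightarrow> \<exists>x\<in>p. Q x) \<Longrightarrow> \<exists>t\<in>set (transversals ps). \<forall>x\<in>set t. Q x"
proof (induction ps)
  case Nil
  then show ?case by simp
next
  case (Cons ab ps)
  obtain a b where ab: "ab = (a, b)" by fastforce
  with Cons.prems have "Q a \<or> Q b" by (auto simp: pair_set_def)
  moreover from Cons obtain t where t: "t \<in> set (transversals ps)" "\<forall>x\<in>set t. Q x"
    by (auto simp: pair_set_def)
  ultimately have "a # t \<in> set (transversals (ab # ps)) \<and> (\<forall>x\<in>set (a # t). Q x)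
      \<or> b # t \<in> set (transversals (ab # ps)) \<and> (\<forall>x\<in>set (b # t). Q x)"
    using ab by auto
  then show ?case by blast
qed

lemma transversals_resolve_by_enumeration:
  assumes "\<forall>t\<in>set (transversals ps). resolving_k V E k (M0 \<union> set t)"
  shows "transversals_resolve V E k (pair_set ps) M0"
proof (rule transversals_resolveI)
  fix M assume M: "M0 \<subseteq> M" "M \<subseteq> V" and hit: "\<And>p. p \<in> pair_set ps \<Longrightarrow> p \<inter> M \<noteq> {}"
  then have "\<exists>x\<in>p. x \<in> M" if "p \<in> pair_set ps" for p using that by blast
  from transversals_choice[of ps "\<lambda>x. x \<in> M", OF this]
  obtain t where t: "t \<in> set (transversals ps)" "set t \<subseteq> M" by blast
  from assms t(1) have "resolving_k V E k (M0 \<union> set t)" by blast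
  moreover from M t(2) have "M0 \<union> set t \<subseteq> M" "M \<subseteq> V" by auto
  ultimately show "resolving_k V E k M" by (rule resolving_k_mono)
qed

lemma pair_free_sets_fail_by_enumeration:
  assumes "\<forall>t\<in>set (transversals ps). \<not> resolving_k V E k (V - B0 - set t)"
  shows "pair_free_sets_fail V E k (pair_set ps) B0"
proof (rule pair_free_sets_failI notI)+
  fix M assume M: "M \<subseteq> V - B0" and no_pair: "\<And>p. p \<in> pair_set ps \<Longrightarrow> \<not> p \<subseteq> M"
    and "resolving_k V E k M"
  from no_pair have "\<exists>x\<in>p. x \<notin> M" if "p \<in> pair_set ps" for p using that by blast
  from transversals_choice[of ps "\<lambda>x. x \<notin> M", OF this]
  obtain t where t: "t \<in> set (transversals ps)" "set t \<inter> M = {}" by blast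
  from M t(2) have "M \<subseteq> V - B0 - set t" "V - B0 - set t \<subseteq> V" by auto
  with \<open>resolving_k V E k M\<close> have "resolving_k V E k (V - B0 - set t)" by (rule resolving_k_mono)
  with assms t(1) show False by blast
qed

definition list_graph :: "(nat \<times> nat) list \<Rightarrow> nat \<Rightarrow> nat \<Rightarrow> bool" where
  "list_graph es x y \<longleftrightarrow> (x, y) \<in> set es \<or> (y, x) \<in> set es"

definition table_dist :: "nat list list \<Rightarrow> nat \<Rightarrow> nat \<Rightarrow> nat" where
  "table_dist tb x y = tb ! x ! y"

definition list_graph_table :: "nat \<Rightarrow> (nat \<times> nat) list \<Rightarrow> nat list list \<Rightarrow> bool" where
  "list_graph_table n es tb \<longleftrightarrow> 0 < n \<and> (\<forall>(x, y)\<in>set es. x < n \<and> y < n \<and> x \<noteq> y)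
     \<and> distance_table {0..<n} (list_graph es) (table_dist tb)"

context
  fixes n es tb
  assumes cert: "list_graph_table n es tb"
begin

lemma list_graph_edges_in: "list_graph es x y \<Longrightarrow> x \<in> {0..<n} \<and> y \<in> {0..<n}"
  using cert by (auto simp: list_graph_table_def list_graph_def)

lemma list_graph_table_distance_table: "distance_table {0..<n} (list_graph es) (table_dist tb)"
  using cert by (simp add: list_graph_table_def)

lemma list_graph_table_conn_graph: "conn_graph {0..<n} (list_graph es)"
  using cert
  by (intro conn_graph_if_distance_table[OF list_graph_edges_in list_graph_table_distance_table])
    (auto simp: list_graph_table_def list_graph_def)

lemma list_graph_table_gdist:
  "\<forall>x\<in>{0..<n}. \<forall>z\<in>{0..<n}. gdist (list_graph es) x z = table_dist tb x z"
  using gdist_eq_distance_table[OF list_graph_edges_in list_graph_table_distance_table] by blast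

lemma list_graph_table_diameter:
  "\<forall>x\<in>{0..<n}. \<forall>z\<in>{0..<n}. table_dist tb x z \<le> d
    \<Longrightarrow> \<forall>x\<in>{0..<n}. \<forall>z\<in>{0..<n}. gdist (list_graph es) x z \<le> d"
  using list_graph_table_gdist by simp

lemma transversals_resolve_by_table:
  "\<forall>t\<in>set (transversals ps). resolving_by_dist {0..<n} (table_dist tb) k (M0 \<union> set t)
    \<Longrightarrow> transversals_resolve {0..<n} (list_graph es) k (pair_set ps) M0"
  by (rule transversals_resolve_by_enumeration)
    (simp add: resolving_k_eq_resolving_by_dist[OF list_graph_table_gdist])

lemma pair_free_sets_fail_by_table:
  "\<forall>t\<in>set (transversals ps). \<not> resolving_by_dist {0..<n} (table_dist tb) k ({0..<n} - B0 - set t)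
    \<Longrightarrow> pair_free_sets_fail {0..<n} (list_graph es) k (pair_set ps) B0"
  by (rule pair_free_sets_fail_by_enumeration)
    (simp add: resolving_k_eq_resolving_by_dist[OF list_graph_table_gdist])

end

section \<open>The graph of part (g)\<close>

lemma in_gV [simp]:
  "Pv i \<in> gV a \<longleftrightarrow> 1 \<le> i \<and> i \<le> a" "Lv i \<in> gV a \<longleftrightarrow> 1 \<le> i \<and> i \<le> a"
  "Lv' i \<in> gV a \<longleftrightarrow> 1 \<le> i \<and> i \<le> a" "Sv i \<in> gV a \<longleftrightarrow> 1 \<le> i \<and> i \<le> a"
  "Sv' i \<in> gV a \<longleftrightarrow> 1 \<le> i \<and> i \<le> a" "Xv i \<in> gV a \<longleftrightarrow> 1 \<le> i \<and> i \<le> a"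
  by (auto simp: gV_def)

lemma Yv_in_gV [simp]: "Yv \<in> gV a" and Zv_in_gV [simp]: "Zv \<in> gV a"
  by (auto simp: gV_def)

lemma gE_simps [simp]:
  "gE a (Lv i) w \<longleftrightarrow> 1 \<le> i \<and> i \<le> a \<and> w = Pv i"
  "gE a w (Lv i) \<longleftrightarrow> 1 \<le> i \<and> i \<le> a \<and> w = Pv i"
  "gE a (Lv' i) w \<longleftrightarrow> 1 \<le> i \<and> i \<le> a \<and> w = Pv i"
  "gE a w (Lv' i) \<longleftrightarrow> 1 \<le> i \<and> i \<le> a \<and> w = Pv i"
  "gE a (Sv i) w \<longleftrightarrow> 1 \<le> i \<and> i \<le> a \<and> (w = Pv i \<or> w = Xv i)"
  "gE a w (Sv i) \<longleftrightarrow> 1 \<le> i \<and> i \<le> a \<and> (w = Pv i \<or> w = Xv i)"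
  "gE a (Sv' i) w \<longleftrightarrow> 1 \<le> i \<and> i \<le> a \<and> (w = Pv i \<or> w = Xv i)"
  "gE a w (Sv' i) \<longleftrightarrow> 1 \<le> i \<and> i \<le> a \<and> (w = Pv i \<or> w = Xv i)"
  "gE a (Xv i) w \<longleftrightarrow> 1 \<le> i \<and> i \<le> a \<and> (w = Sv i \<or> w = Sv' i \<or> w = Yv)"
  "gE a w (Xv i) \<longleftrightarrow> 1 \<le> i \<and> i \<le> a \<and> (w = Sv i \<or> w = Sv' i \<or> w = Yv)"
  "gE a Yv w \<longleftrightarrow> (\<exists>i. 1 \<le> i \<and> i \<le> a \<and> w = Xv i) \<or> w = Zv"
  "gE a w Yv \<longleftrightarrow> (\<exists>i. 1 \<le> i \<and> i \<le> a \<and> w = Xv i) \<or> w = Zv"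
  "gE a Zv w \<longleftrightarrow> w = Yv"
  "gE a w Zv \<longleftrightarrow> w = Yv"
  "gE a (Pv i) (Pv j) \<longleftrightarrow> 1 \<le> i \<and> i \<le> a \<and> 1 \<le> j \<and> j \<le> a \<and> (j = Suc i \<or> i = Suc j)"
  by (auto simp: gE_def gE0_def)

lemma gE_sym: "gE a u w \<longleftrightarrow> gE a w u"
  by (auto simp: gE_def)

lemma gE_in_gV: "gE a u w \<Longrightarrow> u \<in> gV a \<and> w \<in> gV a"
  by (cases u; cases w) auto

lemma reaches_Yv: "x \<in> gV a \<Longrightarrow> (x, Yv) \<in> (edges (gE a))\<^sup>*"
proof -
  let ?R = "(edges (gE a))\<^sup>*"
  have step: "(u, w) \<in> ?R \<Longrightarrow> gE a v u \<Longrightarrow> (v, w) \<in> ?R" for u v w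
    by (rule converse_rtrancl_into_rtrancl) (simp_all add: in_edges)
  have X: "(Xv i, Yv) \<in> ?R" if "1 \<le> i" "i \<le> a" for i
    using step[OF rtrancl_refl, of "Xv i"] that by simp
  have S: "(Sv i, Yv) \<in> ?R" "(Sv' i, Yv) \<in> ?R" if "1 \<le> i" "i \<le> a" for i
    using step[OF X[OF that]] that by simp_all
  have P: "(Pv i, Yv) \<in> ?R" if "1 \<le> i" "i \<le> a" for i
    using step[OF S(1)[OF that]] that by simp
  have L: "(Lv i, Yv) \<in> ?R" "(Lv' i, Yv) \<in> ?R" if "1 \<le> i" "i \<le> a" for i
    using step[OF P[OF that]] that by simp_all
  have Z: "(Zv, Yv) \<in> ?R"
    using step[OF rtrancl_refl, of Zv] by simp
  show "x \<in> gV a \<Longrightarrow> (x, Yv) \<in> ?R"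
    by (cases x) (simp_all add: X S P L Z)
qed

lemma gV_connected: "x \<in> gV a \<Longrightarrow> z \<in> gV a \<Longrightarrow> (x, z) \<in> (edges (gE a))\<^sup>*"
proof -
  assume "x \<in> gV a" "z \<in> gV a"
  have "(edges (gE a))\<inverse> = edges (gE a)"
    by (auto simp: edges_def gE_sym)
  then have "(Yv, z) \<in> (edges (gE a))\<^sup>*"
    using rtrancl_converseI[OF reaches_Yv[OF \<open>z \<in> gV a\<close>]] by simp
  with reaches_Yv[OF \<open>x \<in> gV a\<close>] show ?thesis by (rule rtrancl_trans)
qed

lemma conn_graph_gV: "conn_graph (gV a) (gE a)"
  unfolding conn_graph_def
proof (intro conjI)
  show "finite (gV a)" by (simp add: gV_def)
  show "gV a \<noteq> {}" using Yv_in_gV by blast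
  show "\<forall>x y. gE a x y \<longrightarrow> x \<in> gV a \<and> y \<in> gV a" using gE_in_gV by blast
  show "\<forall>x y. gE a x y \<longrightarrow> gE a y x" using gE_sym by blast
  show "\<forall>x. \<not> gE a x x"
  proof
    fix x show "\<not> gE a x x" by (cases x) auto
  qed
  show "\<forall>x\<in>gV a. \<forall>y\<in>gV a. (x, y) \<in> (edges (gE a))\<^sup>*" using gV_connected by blast
qed

lemma gdist_gE_eq_0_iff: "x \<in> gV a \<Longrightarrow> z \<in> gV a \<Longrightarrow> gdist (gE a) x z = 0 \<longleftrightarrow> x = z"
  by (rule gdist_eq_0_iff[OF gV_connected])

lemma gdist_gE_eq_1_iff:
  "x \<in> gV a \<Longrightarrow> z \<in> gV a \<Longrightarrow> gdist (gE a) x z = 1 \<longleftrightarrow> gE a x z \<and> x \<noteq> z"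
  by (rule gdist_eq_1_iff[OF gV_connected])

lemma gdist_gE_eq_2_iff:
  "x \<in> gV a \<Longrightarrow> z \<in> gV a \<Longrightarrow>
    gdist (gE a) x z = 2 \<longleftrightarrow> (\<exists>w. gE a x w \<and> gE a w z) \<and> \<not> gE a x z \<and> x \<noteq> z"
  by (rule gdist_eq_2_iff[OF gV_connected])

lemma gdist_gE_eq_3_iff:
  "x \<in> gV a \<Longrightarrow> z \<in> gV a \<Longrightarrow>
    gdist (gE a) x z = 3 \<longleftrightarrow> (\<exists>w w'. gE a x w \<and> gE a w w' \<and> gE a w' z)
      \<and> \<not> (\<exists>w. gE a x w \<and> gE a w z) \<and> \<not> gE a x z \<and> x \<noteq> z"
  by (rule gdist_eq_3_iff[OF gV_connected])

text \<open>Breaks the symmetry in \<open>resolving_gV\<close>: an unchosen vertex is separated from every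
  unchosen vertex of the same or a higher layer.\<close>

definition layer :: "gvert \<Rightarrow> nat" where
  "layer x = (case x of Pv _ \<Rightarrow> 0 | Xv _ \<Rightarrow> 1 | Lv _ \<Rightarrow> 2 | Lv' _ \<Rightarrow> 2 | Sv _ \<Rightarrow> 3 | Sv' _ \<Rightarrow> 3
     | Yv \<Rightarrow> 4 | Zv \<Rightarrow> 4)"

context
  fixes a k :: nat and M :: "gvert set"
  assumes M_in: "M \<subseteq> gV a"
    and twins_hit: "\<And>i. 1 \<le> i \<Longrightarrow> i \<le> a \<Longrightarrow> (Lv i \<in> M \<or> Lv' i \<in> M) \<and> (Sv i \<in> M \<or> Sv' i \<in> M)"
    and k_ge_2: "2 \<le> k"
    and tail_hit: "Yv \<in> M \<or> Zv \<in> M \<and> 3 \<le> k"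
begin

lemma distinguishes_member:
  assumes "x \<in> M" "y \<in> gV a" "y \<noteq> x"
  shows "distinguishes (gE a) k M x y"
proof (rule distinguishesI[OF \<open>x \<in> M\<close>, of 0])
  have "x \<in> gV a" using assms(1) M_in by blast
  with assms(2,3) show "gdist (gE a) x x = 0" "gdist (gE a) y x \<noteq> 0"
    by (simp_all add: gdist_gE_eq_0_iff)
qed simp

lemma distinguishes_Pv:
  assumes "1 \<le> j" "j \<le> a" "y \<in> gV a" "y \<noteq> Pv j"
  shows "distinguishes (gE a) k M (Pv j) y"
proof -
  obtain l where l: "l \<in> M" "l = Lv j \<or> l = Lv' j" using twins_hit[OF assms(1,2)] by blast
  then have "l \<in> gV a" using M_in by blast
  show ?thesis
  proof (rule distinguishesI[OF l(1), of 1])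
    show "gdist (gE a) (Pv j) l = 1" "gdist (gE a) y l \<noteq> 1"
      using gdist_gE_eq_1_iff \<open>l \<in> gV a\<close> assms l(2) by auto
  qed (use k_ge_2 in simp)
qed

lemma distinguishes_Xv:
  assumes "1 \<le> j" "j \<le> a" "y \<in> gV a" "y \<noteq> Xv j" "y \<noteq> Pv j"
  shows "distinguishes (gE a) k M (Xv j) y"
proof -
  obtain s where s: "s \<in> M" "s = Sv j \<or> s = Sv' j" using twins_hit[OF assms(1,2)] by blast
  then have "s \<in> gV a" using M_in by blast
  show ?thesis
  proof (rule distinguishesI[OF s(1), of 1])
    show "gdist (gE a) (Xv j) s = 1" "gdist (gE a) y s \<noteq> 1"
      using gdist_gE_eq_1_iff \<open>s \<in> gV a\<close> assms s(2) by auto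
  qed (use k_ge_2 in simp)
qed

text \<open>As \<open>M\<close> meets every twin pair, unchosen twins \<open>x \<noteq> y\<close> sit at different indices
  \<open>i \<noteq> j\<close>, and the chosen twin at \<open>i\<close> is at distance 2 from \<open>x\<close> only.\<close>

lemma distinguishes_twins:
  assumes T: "(T, T') = (Lv, Lv') \<or> (T, T') = (Sv, Sv')"
    and i: "1 \<le> i" "i \<le> a" and j: "1 \<le> j" "j \<le> a"
    and x: "x = T i \<or> x = T' i" "x \<notin> M" and y: "y = T j \<or> y = T' j" "y \<notin> M" and "x \<noteq> y"
  shows "distinguishes (gE a) k M x y"
proof -
  have "i \<noteq> j"
    using T twins_hit[OF i] x y \<open>x \<noteq> y\<close> by auto
  obtain l where l: "l \<in> M" "l = T i \<or> l = T' i"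
    using T twins_hit[OF i] by auto
  have V: "x \<in> gV a" "y \<in> gV a" "l \<in> gV a" using T i j x(1) y(1) l(2) by auto
  show ?thesis
  proof (rule distinguishesI[OF l(1) k_ge_2])
    have "x \<noteq> l" using x(2) l(1) by blast
    with T i x(1) l(2) show "gdist (gE a) x l = 2"
      unfolding gdist_gE_eq_2_iff[OF V(1,3)] by auto
    from T \<open>i \<noteq> j\<close> y(1) l(2) show "gdist (gE a) y l \<noteq> 2"
      unfolding gdist_gE_eq_2_iff[OF V(2,3)] by auto
  qed
qed

lemma distinguishes_mid_leaf:
  assumes i: "1 \<le> i" "i \<le> a" and j: "1 \<le> j" "j \<le> a"
    and x: "x = Sv i \<or> x = Sv' i" and y: "y = Lv j \<or> y = Lv' j"
  shows "distinguishes (gE a) k M x y"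
proof -
  have V: "x \<in> gV a" "y \<in> gV a" using i j x y by auto
  show ?thesis
  proof (cases "Yv \<in> M")
    case True
    show ?thesis
    proof (rule distinguishesI[OF True k_ge_2])
      from i x show "gdist (gE a) x Yv = 2"
        unfolding gdist_gE_eq_2_iff[OF V(1) Yv_in_gV] by auto
      from y show "gdist (gE a) y Yv \<noteq> 2"
        unfolding gdist_gE_eq_2_iff[OF V(2) Yv_in_gV] by auto
    qed
  next
    case False
    with tail_hit have Z: "Zv \<in> M" "3 \<le> k" by auto
    show ?thesis
    proof (rule distinguishesI[OF Z])
      from i x show "gdist (gE a) x Zv = 3"
        unfolding gdist_gE_eq_3_iff[OF V(1) Zv_in_gV] by auto
      from y show "gdist (gE a) y Zv \<noteq> 3"
        unfolding gdist_gE_eq_3_iff[OF V(2) Zv_in_gV] by auto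
    qed
  qed
qed

lemma distinguishes_tail:
  assumes x: "x = Yv \<or> x = Zv" "x \<notin> M"
    and j: "1 \<le> j" "j \<le> a" and y: "y = Lv j \<or> y = Lv' j \<or> y = Sv j \<or> y = Sv' j"
  shows "distinguishes (gE a) k M x y"
proof -
  have yV: "y \<in> gV a" using j y by auto
  define t where "t = (if x = Yv then Zv else Yv)"
  have t: "t \<in> M" "t \<noteq> x" "gE a x t" "t = Yv \<or> t = Zv"
    using x tail_hit by (auto simp: t_def)
  have "t \<in> gV a" using t(1) M_in by blast
  show ?thesis
  proof (rule distinguishesI[OF t(1), of 1])
    show "gdist (gE a) x t = 1" "gdist (gE a) y t \<noteq> 1"
      using gdist_gE_eq_1_iff \<open>t \<in> gV a\<close> yV x t y by auto
  qed (use k_ge_2 in simp)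
qed

lemma distinguishes_by_layer:
  assumes V: "x \<in> gV a" "y \<in> gV a" and "x \<noteq> y" "x \<notin> M" "y \<notin> M" "layer x \<le> layer y"
  shows "distinguishes (gE a) k M x y"
proof (cases x)
  case (Pv j)
  with assms show ?thesis by (auto intro: distinguishes_Pv)
next
  case (Xv j)
  with assms show ?thesis by (auto simp: layer_def intro: distinguishes_Xv)
next
  case (Lv i)
  with assms show ?thesis
    by (cases y) (auto simp: layer_def intro: distinguishes_twins[of Lv Lv']
      distinguishes_sym[OF distinguishes_mid_leaf] distinguishes_sym[OF distinguishes_tail])
next
  case (Lv' i)
  with assms show ?thesis
    by (cases y) (auto simp: layer_def intro: distinguishes_twins[of Lv Lv']
      distinguishes_sym[OF distinguishes_mid_leaf] distinguishes_sym[OF distinguishes_tail])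
next
  case (Sv i)
  with assms show ?thesis
    by (cases y) (auto simp: layer_def intro: distinguishes_twins[of Sv Sv']
      distinguishes_sym[OF distinguishes_tail])
next
  case (Sv' i)
  with assms show ?thesis
    by (cases y) (auto simp: layer_def intro: distinguishes_twins[of Sv Sv']
      distinguishes_sym[OF distinguishes_tail])
next
  case Yv
  with assms tail_hit show ?thesis by (cases y) (auto simp: layer_def)
next
  case Zv
  with assms tail_hit show ?thesis by (cases y) (auto simp: layer_def)
qed

lemma resolving_gV: "resolving_k (gV a) (gE a) k M"
proof (rule resolving_kI[OF M_in])
  fix x y assume V: "x \<in> gV a" "y \<in> gV a" and "x \<noteq> y"
  consider "x \<in> M" | "y \<in> M" | "x \<notin> M" "y \<notin> M" "layer x \<le> layer y"
    | "x \<notin> M" "y \<notin> M" "layer y \<le> layer x" by linarith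
  then show "distinguishes (gE a) k M x y"
  proof cases
    case 1
    with V \<open>x \<noteq> y\<close> show ?thesis by (intro distinguishes_member) auto
  next
    case 2
    with V \<open>x \<noteq> y\<close> show ?thesis by (intro distinguishes_sym[OF distinguishes_member]) auto
  next
    case 3
    with V \<open>x \<noteq> y\<close> show ?thesis by (intro distinguishes_by_layer)
  next
    case 4
    with V \<open>x \<noteq> y\<close> show ?thesis by (intro distinguishes_sym[OF distinguishes_by_layer]) auto
  qed
qed

end

definition twin_pairs :: "nat \<Rightarrow> gvert set set" where
  "twin_pairs a = (\<lambda>i. {Lv i, Lv' i}) ` {1..a} \<union> (\<lambda>i. {Sv i, Sv' i}) ` {1..a}"

lemma disjoint_pairs_gV:
  "disjoint_pairs (gV a) (twin_pairs a)"
  "disjoint_pairs (gV a) (twin_pairs a \<union> {{Yv, Zv}})"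
  "disjoint_pairs (gV a) (twin_pairs a \<union> (\<lambda>i. {Pv i, Xv i}) ` {1..a})"
  "2 \<le> a \<Longrightarrow> disjoint_pairs (gV a) (twin_pairs a \<union> {{Xv 1, Xv 2}})"
  by (auto simp: disjoint_pairs_def twin_pairs_def pairwise_def disjnt_def)

lemma twin_pairs_memI:
  assumes "1 \<le> i" "i \<le> a"
  shows "{Lv i, Lv' i} \<in> twin_pairs a" "{Sv i, Sv' i} \<in> twin_pairs a"
proof -
  from assms show "{Lv i, Lv' i} \<in> twin_pairs a"
    unfolding twin_pairs_def by (intro UnI1 imageI) simp
  from assms show "{Sv i, Sv' i} \<in> twin_pairs a"
    unfolding twin_pairs_def by (intro UnI2 imageI) simp
qed

lemma twin_pairs_hit:
  assumes "\<forall>p\<in>twin_pairs a. p \<inter> M \<noteq> {}" "1 \<le> i" "i \<le> a"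
  shows "(Lv i \<in> M \<or> Lv' i \<in> M) \<and> (Sv i \<in> M \<or> Sv' i \<in> M)"
proof -
  have "{Lv i, Lv' i} \<inter> M \<noteq> {}" "{Sv i, Sv' i} \<inter> M \<noteq> {}"
    using assms(1) twin_pairs_memI[OF assms(2,3)] by blast+
  then show ?thesis by blast
qed

lemma transversals_resolve_gV_3:
  assumes "3 \<le> k"
  shows "transversals_resolve (gV a) (gE a) k (twin_pairs a \<union> {{Yv, Zv}}) {}"
proof (rule transversals_resolveI)
  fix M assume M: "M \<subseteq> gV a" and hit: "\<And>p. p \<in> twin_pairs a \<union> {{Yv, Zv}} \<Longrightarrow> p \<inter> M \<noteq> {}"
  have "\<forall>p\<in>twin_pairs a. p \<inter> M \<noteq> {}" using hit by blast
  moreover have "Yv \<in> M \<or> Zv \<in> M \<and> 3 \<le> k" using hit[of "{Yv, Zv}"] assms by blast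
  ultimately show "resolving_k (gV a) (gE a) k M"
    using M assms by (intro resolving_gV twin_pairs_hit) auto
qed

lemma transversals_resolve_gV_2: "transversals_resolve (gV a) (gE a) 2 (twin_pairs a) {Yv}"
proof (rule transversals_resolveI)
  fix M assume "{Yv} \<subseteq> M" "M \<subseteq> gV a" "\<And>p. p \<in> twin_pairs a \<Longrightarrow> p \<inter> M \<noteq> {}"
  then show "resolving_k (gV a) (gE a) 2 M"
    by (intro resolving_gV twin_pairs_hit) auto
qed

lemma dk_gE_1_eq:
  "x \<in> gV a \<Longrightarrow> z \<in> gV a \<Longrightarrow> dk (gE a) 1 x z = (if x = z then 0 else if gE a x z then 1 else 2)"
  by (rule dk_1_eq[OF gV_connected])

lemma dk_gE_2_eq:
  "x \<in> gV a \<Longrightarrow> z \<in> gV a \<Longrightarrow>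
    dk (gE a) 2 x z = (if x = z then 0 else if gE a x z then 1 else if \<exists>w. gE a x w \<and> gE a w z then 2 else 3)"
  by (rule dk_2_eq[OF gV_connected])

lemma dk_gE_1_leaf_eq_mid:
  assumes i: "1 \<le> i" "i \<le> a" and l: "l = Lv i \<or> l = Lv' i" and s: "s = Sv i \<or> s = Sv' i"
    and z: "z \<in> gV a" "z \<noteq> l" "z \<noteq> s" "z \<noteq> Xv i"
  shows "dk (gE a) 1 l z = dk (gE a) 1 s z"
proof -
  have V: "l \<in> gV a" "s \<in> gV a" using i l s by auto
  have "gE a l z \<longleftrightarrow> z = Pv i" "gE a s z \<longleftrightarrow> z = Pv i \<or> z = Xv i" using i l s by auto
  with z show ?thesis unfolding dk_gE_1_eq[OF V(1) z(1)] dk_gE_1_eq[OF V(2) z(1)] by auto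
qed

lemma dk_gE_1_leaf_eq_leaf:
  assumes l: "1 \<le> i" "i \<le> a" "l = Lv i \<or> l = Lv' i" and l': "1 \<le> j" "j \<le> a" "l' = Lv j \<or> l' = Lv' j"
    and z: "z \<in> gV a" "z \<noteq> l" "z \<noteq> l'" "z \<noteq> Pv i" "z \<noteq> Pv j"
  shows "dk (gE a) 1 l z = dk (gE a) 1 l' z"
proof -
  have V: "l \<in> gV a" "l' \<in> gV a" using l l' by auto
  have "\<not> gE a l z" "\<not> gE a l' z" using l(3) l'(3) z by auto
  with z show ?thesis unfolding dk_gE_1_eq[OF V(1) z(1)] dk_gE_1_eq[OF V(2) z(1)] by auto
qed

lemma dk_gE_2_leaf_eq_mid:
  assumes i: "1 \<le> i" "i \<le> a" and l: "l = Lv i \<or> l = Lv' i" and s: "s = Sv i \<or> s = Sv' i"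
    and z: "z \<in> gV a" "z \<noteq> l" "z \<noteq> s" "z \<noteq> Xv i" "z \<noteq> Yv"
  shows "dk (gE a) 2 l z = dk (gE a) 2 s z"
proof -
  have V: "l \<in> gV a" "s \<in> gV a" using i l s by auto
  have "gE a l z \<longleftrightarrow> gE a s z" using i l s z by auto
  moreover have "(\<exists>w. gE a l w \<and> gE a w z) \<longleftrightarrow> gE a (Pv i) z" using i l by auto
  moreover have "(\<exists>w. gE a s w \<and> gE a w z) \<longleftrightarrow> gE a (Pv i) z \<or> gE a (Xv i) z"
    using i s by auto
  moreover have "gE a (Xv i) z \<longrightarrow> gE a (Pv i) z" using i z by auto
  ultimately show ?thesis
    unfolding dk_gE_2_eq[OF V(1) z(1)] dk_gE_2_eq[OF V(2) z(1)] using z by simp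
qed

text \<open>Breaker keeps a twin of every pair free. At \<open>k = 1\<close> he also keeps one of \<open>v\<^sub>i, x\<^sub>i\<close>
  free: if Maker holds some \<open>v\<^sub>i\<close>, a free leaf and a free \<open>s\<close>-vertex at \<open>v\<^sub>i\<close> look alike,
  and otherwise free leaves at \<open>v\<^sub>1\<close> and \<open>v\<^sub>2\<close> do.\<close>

lemma pair_free_sets_fail_gV_1:
  assumes "2 \<le> a"
  shows "pair_free_sets_fail (gV a) (gE a) 1 (twin_pairs a \<union> (\<lambda>i. {Pv i, Xv i}) ` {1..a}) {}"
proof (rule pair_free_sets_failI)
  fix M assume M: "M \<subseteq> gV a - {}"
    and no_pair: "\<And>p. p \<in> twin_pairs a \<union> (\<lambda>i. {Pv i, Xv i}) ` {1..a} \<Longrightarrow> \<not> p \<subseteq> M"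
  have free_twins: "\<exists>l s. (l = Lv i \<or> l = Lv' i) \<and> l \<notin> M \<and> (s = Sv i \<or> s = Sv' i) \<and> s \<notin> M"
    if "1 \<le> i" "i \<le> a" for i
  proof -
    have "\<not> {Lv i, Lv' i} \<subseteq> M" "\<not> {Sv i, Sv' i} \<subseteq> M"
      using no_pair[OF UnI1[OF twin_pairs_memI(1)[OF that]]]
        no_pair[OF UnI1[OF twin_pairs_memI(2)[OF that]]] .
    then show ?thesis by auto
  qed
  show "\<not> resolving_k (gV a) (gE a) 1 M"
  proof (cases "\<exists>i. 1 \<le> i \<and> i \<le> a \<and> Pv i \<in> M")
    case True
    then obtain i where i: "1 \<le> i" "i \<le> a" "Pv i \<in> M" by blast
    then have "i \<in> {1..a}" by simp
    from no_pair[OF UnI2[OF imageI[OF this]]] i(3) have "Xv i \<notin> M" by blast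
    moreover obtain l s where "l = Lv i \<or> l = Lv' i" "l \<notin> M" "s = Sv i \<or> s = Sv' i" "s \<notin> M"
      using free_twins[OF i(1,2)] by blast
    ultimately show ?thesis
      using i M dk_gE_1_leaf_eq_mid[of i a l s] by (intro not_resolving_kI[of l _ s]) auto
  next
    case False
    obtain l l' where l: "l = Lv 1 \<or> l = Lv' 1" "l \<notin> M" and l': "l' = Lv 2 \<or> l' = Lv' 2" "l' \<notin> M"
      using free_twins[of 1] free_twins[of 2] assms by auto
    have "Pv 1 \<notin> M" "Pv 2 \<notin> M" using False assms by auto
    show ?thesis
    proof (rule not_resolving_kI)
      show "l \<in> gV a" "l' \<in> gV a" "l \<noteq> l'" using l(1) l'(1) assms by auto
      fix z assume "z \<in> M"
      with M l l' \<open>Pv 1 \<notin> M\<close> \<open>Pv 2 \<notin> M\<close> show "dk (gE a) 1 l z = dk (gE a) 1 l' z"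
        using assms by (intro dk_gE_1_leaf_eq_leaf[of 1 a _ 2]) auto
    qed
  qed
qed

text \<open>At \<open>k = 2\<close>, with \<open>y\<close> taken by Breaker, he keeps one of \<open>x\<^sub>1, x\<^sub>2\<close> free; at that
  \<open>x\<^sub>c\<close> a free leaf and a free \<open>s\<close>-vertex look alike.\<close>

lemma pair_free_sets_fail_gV_2:
  assumes "2 \<le> a"
  shows "pair_free_sets_fail (gV a) (gE a) 2 (twin_pairs a \<union> {{Xv 1, Xv 2}}) {Yv}"
proof (rule pair_free_sets_failI)
  fix M assume M: "M \<subseteq> gV a - {Yv}"
    and no_pair: "\<And>p. p \<in> twin_pairs a \<union> {{Xv 1, Xv 2}} \<Longrightarrow> \<not> p \<subseteq> M"
  have "\<not> {Xv 1, Xv 2} \<subseteq> M" by (rule no_pair) simp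
  then obtain c where "c \<in> {1, 2}" "Xv c \<notin> M" by blast
  with assms have c: "1 \<le> c" "c \<le> a" "Xv c \<notin> M" by auto
  have "\<not> {Lv c, Lv' c} \<subseteq> M" "\<not> {Sv c, Sv' c} \<subseteq> M"
    using no_pair[OF UnI1[OF twin_pairs_memI(1)[OF c(1,2)]]]
      no_pair[OF UnI1[OF twin_pairs_memI(2)[OF c(1,2)]]] .
  then obtain l s where "l = Lv c \<or> l = Lv' c" "l \<notin> M" "s = Sv c \<or> s = Sv' c" "s \<notin> M"
    by auto
  with c M show "\<not> resolving_k (gV a) (gE a) 2 M"
    using dk_gE_2_leaf_eq_mid[of c a l s] by (intro not_resolving_kI[of l _ s]) auto
qed

lemma gV_outcomes:
  assumes "2 \<le> a"
  shows "conn_graph (gV a) (gE a)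
      \<and> O_R 1 (gV a) (gE a) = Outcome_B
      \<and> O_R 2 (gV a) (gE a) = Outcome_N
      \<and> (\<forall>k\<ge>3. O_R k (gV a) (gE a) = Outcome_M)"
proof (intro conjI allI impI)
  have fin: "finite (gV a)" by (simp add: gV_def)
  show "conn_graph (gV a) (gE a)" by (rule conn_graph_gV)
  show "O_R 1 (gV a) (gE a) = Outcome_B"
    by (rule O_R_eq_Outcome_B_by_pairing[OF fin disjoint_pairs_gV(3)
          pair_free_sets_fail_gV_1[OF assms] Yv_in_gV])
  show "O_R 2 (gV a) (gE a) = Outcome_N"
    by (rule O_R_eq_Outcome_N_by_pairing[OF fin disjoint_pairs_gV(1) transversals_resolve_gV_2
          Yv_in_gV disjoint_pairs_gV(4)[OF assms] pair_free_sets_fail_gV_2[OF assms] Yv_in_gV])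
  show "O_R k (gV a) (gE a) = Outcome_M" if "3 \<le> k" for k
    by (rule O_R_eq_Outcome_M_by_pairing[OF fin disjoint_pairs_gV(2)
          transversals_resolve_gV_3[OF that] Yv_in_gV])
qed

section \<open>Small examples\<close>

definition path2_edges :: "(nat \<times> nat) list" where
  "path2_edges = [(0, 1)]"
definition path2_dist :: "nat list list" where
  "path2_dist = [[0, 1], [1, 0]]"

lemma path2_table: "list_graph_table 2 path2_edges path2_dist"
  by code_simp

lemma path2_outcomes:
  "conn_graph {0..<2} (list_graph path2_edges)
    \<and> (\<forall>k\<ge>1. O_R k {0..<2} (list_graph path2_edges) = Outcome_M)"
proof (intro conjI allI impI)
  show "conn_graph {0..<2} (list_graph path2_edges)"
    by (rule list_graph_table_conn_graph[OF path2_table])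
  have "transversals_resolve {0..<2} (list_graph path2_edges) 1 (pair_set [(0, 1)]) {}"
    by (rule transversals_resolve_by_table[OF path2_table]) code_simp
  moreover fix k :: nat assume "1 \<le> k"
  ultimately have "transversals_resolve {0..<2} (list_graph path2_edges) k (pair_set [(0, 1)]) {}"
    by (rule transversals_resolve_mono_k)
  then show "O_R k {0..<2} (list_graph path2_edges) = Outcome_M"
    by (rule O_R_eq_Outcome_M_by_pairing[where a = 0, rotated 2])
      (simp_all add: disjoint_pairs_pair_set)
qed

definition triangle_edges :: "(nat \<times> nat) list" where
  "triangle_edges = [(0, 1), (0, 2), (1, 2)]"
definition triangle_dist :: "nat list list" where
  "triangle_dist = [[0, 1, 1], [1, 0, 1], [1, 1, 0]]"

lemma triangle_table: "list_graph_table 3 triangle_edges triangle_dist"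
  by code_simp

lemma triangle_outcomes:
  "conn_graph {0..<3} (list_graph triangle_edges)
    \<and> (\<forall>k\<ge>1. O_R k {0..<3} (list_graph triangle_edges) = Outcome_N)"
proof (intro conjI allI impI)
  show "conn_graph {0..<3} (list_graph triangle_edges)"
    by (rule list_graph_table_conn_graph[OF triangle_table])
  have pairs: "disjoint_pairs {0..<3::nat} (pair_set [(1, 2)])"
    by (simp add: disjoint_pairs_pair_set)
  have maker: "transversals_resolve {0..<3} (list_graph triangle_edges) 1 (pair_set [(1, 2)]) {0}"
    by (rule transversals_resolve_by_table[OF triangle_table]) code_simp
  have diameter: "\<forall>x\<in>{0..<3}. \<forall>z\<in>{0..<3}. gdist (list_graph triangle_edges) x z \<le> 0 + 1"
    by (rule list_graph_table_diameter[OF triangle_table]) code_simp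
  have "pair_free_sets_fail {0..<3} (list_graph triangle_edges) 0 (pair_set [(1, 2)]) {0}"
    by (rule pair_free_sets_fail_by_table[OF triangle_table]) code_simp
  with diameter have breaker:
    "pair_free_sets_fail {0..<3} (list_graph triangle_edges) k (pair_set [(1, 2)]) {0}" for k
    by (rule pair_free_sets_fail_all_k)
  fix k :: nat assume "1 \<le> k"
  with maker have maker_k:
    "transversals_resolve {0..<3} (list_graph triangle_edges) k (pair_set [(1, 2)]) {0}"
    by (rule transversals_resolve_mono_k)
  show "O_R k {0..<3} (list_graph triangle_edges) = Outcome_N"
    by (rule O_R_eq_Outcome_N_by_pairing[OF _ pairs maker_k _ pairs breaker]) simp_all
qed

definition K4_edges :: "(nat \<times> nat) list" where
  "K4_edges = [(0, 1), (0, 2), (0, 3), (1, 2), (1, 3), (2, 3)]"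
definition K4_dist :: "nat list list" where
  "K4_dist = [[0, 1, 1, 1], [1, 0, 1, 1], [1, 1, 0, 1], [1, 1, 1, 0]]"

lemma K4_table: "list_graph_table 4 K4_edges K4_dist"
  by code_simp

lemma K4_outcomes:
  "conn_graph {0..<4} (list_graph K4_edges)
    \<and> (\<forall>k\<ge>1. O_R k {0..<4} (list_graph K4_edges) = Outcome_B)"
proof (intro conjI allI impI)
  show "conn_graph {0..<4} (list_graph K4_edges)"
    by (rule list_graph_table_conn_graph[OF K4_table])
  have diameter: "\<forall>x\<in>{0..<4}. \<forall>z\<in>{0..<4}. gdist (list_graph K4_edges) x z \<le> 0 + 1"
    by (rule list_graph_table_diameter[OF K4_table]) code_simp
  have "pair_free_sets_fail {0..<4} (list_graph K4_edges) 0 (pair_set [(0, 1), (2, 3)]) {}"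
    by (rule pair_free_sets_fail_by_table[OF K4_table]) code_simp
  with diameter have "pair_free_sets_fail {0..<4} (list_graph K4_edges) k (pair_set [(0, 1), (2, 3)]) {}"
    for k by (rule pair_free_sets_fail_all_k)
  then show "O_R k {0..<4} (list_graph K4_edges) = Outcome_B" for k
    by (rule O_R_eq_Outcome_B_by_pairing[where b = 0, rotated 2])
      (simp_all add: disjoint_pairs_pair_set)
qed

definition path5_edges :: "(nat \<times> nat) list" where
  "path5_edges = [(0, 1), (1, 2), (2, 3), (3, 4)]"
definition path5_dist :: "nat list list" where
  "path5_dist = [[0, 1, 2, 3, 4], [1, 0, 1, 2, 3], [2, 1, 0, 1, 2], [3, 2, 1, 0, 1], [4, 3, 2, 1, 0]]"

lemma path5_table: "list_graph_table 5 path5_edges path5_dist"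
  by code_simp

lemma path5_outcomes:
  "conn_graph {0..<5} (list_graph path5_edges)
    \<and> O_R 1 {0..<5} (list_graph path5_edges) = Outcome_N
    \<and> (\<forall>k\<ge>2. O_R k {0..<5} (list_graph path5_edges) = Outcome_M)"
proof (intro conjI allI impI)
  show "conn_graph {0..<5} (list_graph path5_edges)"
    by (rule list_graph_table_conn_graph[OF path5_table])
  have "transversals_resolve {0..<5} (list_graph path5_edges) 1 (pair_set [(2, 4)]) {0}"
    by (rule transversals_resolve_by_table[OF path5_table]) code_simp
  moreover have "pair_free_sets_fail {0..<5} (list_graph path5_edges) 1 (pair_set [(0, 4), (1, 3)]) {2}"
    by (rule pair_free_sets_fail_by_table[OF path5_table]) code_simp
  ultimately show "O_R 1 {0..<5} (list_graph path5_edges) = Outcome_N"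
    by (intro O_R_eq_Outcome_N_by_pairing[where a = 0 and b = 2])
      (simp_all add: disjoint_pairs_pair_set)
  have "transversals_resolve {0..<5} (list_graph path5_edges) 2 (pair_set [(1, 2), (3, 4)]) {}"
    by (rule transversals_resolve_by_table[OF path5_table]) code_simp
  moreover fix k :: nat assume "2 \<le> k"
  ultimately have "transversals_resolve {0..<5} (list_graph path5_edges) k (pair_set [(1, 2), (3, 4)]) {}"
    by (rule transversals_resolve_mono_k)
  then show "O_R k {0..<5} (list_graph path5_edges) = Outcome_M"
    by (rule O_R_eq_Outcome_M_by_pairing[where a = 0, rotated 2])
      (simp_all add: disjoint_pairs_pair_set)
qed

definition tree8_edges :: "(nat \<times> nat) list" where
  "tree8_edges = [(0, 1), (0, 2), (0, 3), (0, 4), (1, 5), (5, 6), (5, 7)]"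
definition tree8_dist :: "nat list list" where
  "tree8_dist = [[0, 1, 1, 1, 1, 2, 3, 3], [1, 0, 2, 2, 2, 1, 2, 2], [1, 2, 0, 2, 2, 3, 4, 4],
    [1, 2, 2, 0, 2, 3, 4, 4], [1, 2, 2, 2, 0, 3, 4, 4], [2, 1, 3, 3, 3, 0, 1, 1],
    [3, 2, 4, 4, 4, 1, 0, 2], [3, 2, 4, 4, 4, 1, 2, 0]]"

lemma tree8_table: "list_graph_table 8 tree8_edges tree8_dist"
  by code_simp

lemma tree8_outcomes:
  "conn_graph {0..<8} (list_graph tree8_edges)
    \<and> O_R 1 {0..<8} (list_graph tree8_edges) = Outcome_B
    \<and> (\<forall>k\<ge>2. O_R k {0..<8} (list_graph tree8_edges) = Outcome_N)"
proof (intro conjI allI impI)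
  show "conn_graph {0..<8} (list_graph tree8_edges)"
    by (rule list_graph_table_conn_graph[OF tree8_table])
  have "pair_free_sets_fail {0..<8} (list_graph tree8_edges) 1
      (pair_set [(0, 1), (2, 3), (4, 5), (6, 7)]) {}"
    by (rule pair_free_sets_fail_by_table[OF tree8_table]) code_simp
  then show "O_R 1 {0..<8} (list_graph tree8_edges) = Outcome_B"
    by (rule O_R_eq_Outcome_B_by_pairing[where b = 0, rotated 2])
      (simp_all add: disjoint_pairs_pair_set)
  have "transversals_resolve {0..<8} (list_graph tree8_edges) 2 (pair_set [(3, 4), (6, 7)]) {2}"
    by (rule transversals_resolve_by_table[OF tree8_table]) code_simp
  moreover fix k :: nat assume "2 \<le> k"
  ultimately have maker: "transversals_resolve {0..<8} (list_graph tree8_edges) k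
      (pair_set [(3, 4), (6, 7)]) {2}"
    by (rule transversals_resolve_mono_k)
  have diameter: "\<forall>x\<in>{0..<8}. \<forall>z\<in>{0..<8}. gdist (list_graph tree8_edges) x z \<le> 3 + 1"
    by (rule list_graph_table_diameter[OF tree8_table]) code_simp
  have "pair_free_sets_fail {0..<8} (list_graph tree8_edges) 3 (pair_set [(3, 4)]) {2}"
    by (rule pair_free_sets_fail_by_table[OF tree8_table]) code_simp
  with diameter have breaker: "pair_free_sets_fail {0..<8} (list_graph tree8_edges) k
      (pair_set [(3, 4)]) {2}"
    by (rule pair_free_sets_fail_all_k)
  show "O_R k {0..<8} (list_graph tree8_edges) = Outcome_N"
    by (rule O_R_eq_Outcome_N_by_pairing[OF _ _ maker _ _ breaker])
      (simp_all add: disjoint_pairs_pair_set)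
qed

definition tree10_edges :: "(nat \<times> nat) list" where
  "tree10_edges = [(0, 1), (0, 2), (0, 3), (0, 4), (1, 5), (1, 6), (2, 7), (7, 8), (7, 9)]"
definition tree10_dist :: "nat list list" where
  "tree10_dist = [[0, 1, 1, 1, 1, 2, 2, 2, 3, 3], [1, 0, 2, 2, 2, 1, 1, 3, 4, 4],
    [1, 2, 0, 2, 2, 3, 3, 1, 2, 2], [1, 2, 2, 0, 2, 3, 3, 3, 4, 4], [1, 2, 2, 2, 0, 3, 3, 3, 4, 4],
    [2, 1, 3, 3, 3, 0, 2, 4, 5, 5], [2, 1, 3, 3, 3, 2, 0, 4, 5, 5], [2, 3, 1, 3, 3, 4, 4, 0, 1, 1],
    [3, 4, 2, 4, 4, 5, 5, 1, 0, 2], [3, 4, 2, 4, 4, 5, 5, 1, 2, 0]]"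

lemma tree10_table: "list_graph_table 10 tree10_edges tree10_dist"
  by code_simp

lemma tree10_outcomes:
  "conn_graph {0..<10} (list_graph tree10_edges)
    \<and> O_R 1 {0..<10} (list_graph tree10_edges) = Outcome_B
    \<and> (\<forall>k\<ge>2. O_R k {0..<10} (list_graph tree10_edges) = Outcome_M)"
proof (intro conjI allI impI)
  show "conn_graph {0..<10} (list_graph tree10_edges)"
    by (rule list_graph_table_conn_graph[OF tree10_table])
  have "pair_free_sets_fail {0..<10} (list_graph tree10_edges) 1
      (pair_set [(0, 3), (1, 2), (4, 5), (6, 7), (8, 9)]) {}"
    by (rule pair_free_sets_fail_by_table[OF tree10_table]) code_simp
  then show "O_R 1 {0..<10} (list_graph tree10_edges) = Outcome_B"
    by (rule O_R_eq_Outcome_B_by_pairing[where b = 0, rotated 2])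
      (simp_all add: disjoint_pairs_pair_set)
  have "transversals_resolve {0..<10} (list_graph tree10_edges) 2
      (pair_set [(3, 4), (5, 6), (8, 9)]) {}"
    by (rule transversals_resolve_by_table[OF tree10_table]) code_simp
  moreover fix k :: nat assume "2 \<le> k"
  ultimately have "transversals_resolve {0..<10} (list_graph tree10_edges) k
      (pair_set [(3, 4), (5, 6), (8, 9)]) {}"
    by (rule transversals_resolve_mono_k)
  then show "O_R k {0..<10} (list_graph tree10_edges) = Outcome_M"
    by (rule O_R_eq_Outcome_M_by_pairing[where a = 0, rotated 2])
      (simp_all add: disjoint_pairs_pair_set)
qed

text \<open>The graph of part (g) for \<open>\<alpha> = 2\<close>, with vertices numbered
  \<open>v\<^sub>1, l\<^sub>1, l'\<^sub>1, s\<^sub>1, s'\<^sub>1, x\<^sub>1, v\<^sub>2, l\<^sub>2, l'\<^sub>2, s\<^sub>2, s'\<^sub>2, x\<^sub>2, y, z\<close>.\<close>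

definition g2_edges :: "(nat \<times> nat) list" where
  "g2_edges = [(0, 1), (0, 2), (0, 3), (0, 4), (3, 5), (4, 5), (5, 12), (6, 7), (6, 8), (6, 9),
    (6, 10), (9, 11), (10, 11), (11, 12), (0, 6), (12, 13)]"
definition g2_dist :: "nat list list" where
  "g2_dist = [[0, 1, 1, 1, 1, 2, 1, 2, 2, 2, 2, 3, 3, 4], [1, 0, 2, 2, 2, 3, 2, 3, 3, 3, 3, 4, 4, 5],
    [1, 2, 0, 2, 2, 3, 2, 3, 3, 3, 3, 4, 4, 5], [1, 2, 2, 0, 2, 1, 2, 3, 3, 3, 3, 3, 2, 3],
    [1, 2, 2, 2, 0, 1, 2, 3, 3, 3, 3, 3, 2, 3], [2, 3, 3, 1, 1, 0, 3, 4, 4, 3, 3, 2, 1, 2],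
    [1, 2, 2, 2, 2, 3, 0, 1, 1, 1, 1, 2, 3, 4], [2, 3, 3, 3, 3, 4, 1, 0, 2, 2, 2, 3, 4, 5],
    [2, 3, 3, 3, 3, 4, 1, 2, 0, 2, 2, 3, 4, 5], [2, 3, 3, 3, 3, 3, 1, 2, 2, 0, 2, 1, 2, 3],
    [2, 3, 3, 3, 3, 3, 1, 2, 2, 2, 0, 1, 2, 3], [3, 4, 4, 3, 3, 2, 2, 3, 3, 1, 1, 0, 1, 2],
    [3, 4, 4, 2, 2, 1, 3, 4, 4, 2, 2, 1, 0, 1], [4, 5, 5, 3, 3, 2, 4, 5, 5, 3, 3, 2, 1, 0]]"

lemma g2_table: "list_graph_table 14 g2_edges g2_dist"
  by code_simp

lemma g2_outcomes:
  "conn_graph {0..<14} (list_graph g2_edges)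
    \<and> O_R 1 {0..<14} (list_graph g2_edges) = Outcome_B
    \<and> O_R 2 {0..<14} (list_graph g2_edges) = Outcome_N
    \<and> (\<forall>k\<ge>3. O_R k {0..<14} (list_graph g2_edges) = Outcome_M)"
proof (intro conjI allI impI)
  show "conn_graph {0..<14} (list_graph g2_edges)"
    by (rule list_graph_table_conn_graph[OF g2_table])
  have "pair_free_sets_fail {0..<14} (list_graph g2_edges) 1
      (pair_set [(1, 2), (7, 8), (3, 4), (9, 10), (0, 5), (6, 11)]) {}"
    by (rule pair_free_sets_fail_by_table[OF g2_table]) code_simp
  then show "O_R 1 {0..<14} (list_graph g2_edges) = Outcome_B"
    by (rule O_R_eq_Outcome_B_by_pairing[where b = 0, rotated 2])
      (simp_all add: disjoint_pairs_pair_set)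
  have "transversals_resolve {0..<14} (list_graph g2_edges) 2
      (pair_set [(1, 2), (7, 8), (3, 4), (9, 10)]) {12}"
    by (rule transversals_resolve_by_table[OF g2_table]) code_simp
  moreover have "pair_free_sets_fail {0..<14} (list_graph g2_edges) 2
      (pair_set [(1, 2), (7, 8), (3, 4), (9, 10), (5, 11)]) {12}"
    by (rule pair_free_sets_fail_by_table[OF g2_table]) code_simp
  ultimately show "O_R 2 {0..<14} (list_graph g2_edges) = Outcome_N"
    by (intro O_R_eq_Outcome_N_by_pairing[where a = 12 and b = 12])
      (simp_all add: disjoint_pairs_pair_set)
  have "transversals_resolve {0..<14} (list_graph g2_edges) 3
      (pair_set [(1, 2), (7, 8), (3, 4), (9, 10), (12, 13)]) {}"
    by (rule transversals_resolve_by_table[OF g2_table]) code_simp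
  moreover fix k :: nat assume "3 \<le> k"
  ultimately have "transversals_resolve {0..<14} (list_graph g2_edges) k
      (pair_set [(1, 2), (7, 8), (3, 4), (9, 10), (12, 13)]) {}"
    by (rule transversals_resolve_mono_k)
  then show "O_R k {0..<14} (list_graph g2_edges) = Outcome_M"
    by (rule O_R_eq_Outcome_M_by_pairing[where a = 0, rotated 2])
      (simp_all add: disjoint_pairs_pair_set)
qed

theorem theorem2p13:
  shows
   "(\<exists>(V :: nat set) E. conn_graph V E \<and> (\<forall>k\<ge>1. O_R k V E = Outcome_M))
  \<and> (\<exists>(V :: nat set) E. conn_graph V E \<and> (\<forall>k\<ge>1. O_R k V E = Outcome_N))
  \<and> (\<exists>(V :: nat set) E. conn_graph V E \<and> (\<forall>k\<ge>1. O_R k V E = Outcome_B))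
  \<and> (\<exists>(V :: nat set) E. conn_graph V E \<and> O_R 1 V E = Outcome_N
        \<and> (\<forall>k\<ge>2. O_R k V E = Outcome_M))
  \<and> (\<exists>(V :: nat set) E. conn_graph V E \<and> O_R 1 V E = Outcome_B
        \<and> (\<forall>k\<ge>2. O_R k V E = Outcome_N))
  \<and> (\<exists>(V :: nat set) E. conn_graph V E \<and> O_R 1 V E = Outcome_B
        \<and> (\<forall>k\<ge>2. O_R k V E = Outcome_M))
  \<and> (\<forall>\<alpha>::nat. \<alpha> \<ge> 2 \<longrightarrow>
        conn_graph (gV \<alpha>) (gE \<alpha>)
      \<and> O_R 1 (gV \<alpha>) (gE \<alpha>) = Outcome_B
      \<and> O_R 2 (gV \<alpha>) (gE \<alpha>) = Outcome_N
      \<and> (\<forall>k\<ge>3. O_R k (gV \<alpha>) (gE \<alpha>) = Outcome_M))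
  \<and> (\<exists>(V :: nat set) E. conn_graph V E \<and> O_R 1 V E = Outcome_B
        \<and> O_R 2 V E = Outcome_N \<and> (\<forall>k\<ge>3. O_R k V E = Outcome_M))"
  using path2_outcomes triangle_outcomes K4_outcomes path5_outcomes tree8_outcomes tree10_outcomes
    gV_outcomes g2_outcomes
  by (intro conjI) blast+

end
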